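(* Let $d\ge0$ and let $a,b,c$ be nonnegative integers such that $s=a+b+c-d$ is positive. Then in $S_{\mathbb{Z}}(2,d)$ the following identities hold: $$f^{(a)}\binom{H_2}{b}e^{(c)}=\sum_{k=s}^{\min(a,c)}(-1)^{k-s}\binom{k-1}{s-1}\binom{b+k}{k}f^{(a-k)}\binom{H_2}{b+k}e^{(c-k)},$$ $$e^{(a)}\binom{H_1}{b}f^{(c)}=\sum_{k=s}^{\min(a,c)}(-1)^{k-s}\binom{k-1}{s-1}\binom{b+k}{k}e^{(a-k)}\binom{H_1}{b+k}f^{(c-k)}$$ (an empty sum being $0$).
   Context: Let $E=\mathbb{Q}^2$ with standard basis $e_1,e_2$, $E_{\mathbb{Z}}=\mathbb{Z}e_1\oplus\mathbb{Z}e_2$. Let $\rho_d:U(\mathfrak{gl}_2)\to\mathrm{End}_{\mathbb{Q}}(E^{\otimes d})$ be the representation in which $x\in\mathfrak{gl}_2$ acts as $\sum_{i=1}^d 1\otimes\cdots\otimes x\otimes\cdots\otimes 1$; its image is the Schur algebra $S_{\mathbb{Q}}(2,d)$. The integral Schur algebra $S_{\mathbb{Z}}(2,d)=\mathrm{End}_{\mathbb{Z}\Sigma_d}(E_{\mathbb{Z}}^{\otimes d})$ is regarded as a subring of $S_{\mathbb{Q}}(2,d)$. Write $e,f,H_1,H_2$ for the images under $\rho_d$ of the matrix units $e_{12},e_{21},e_{11},e_{22}$. For an element $T$ and integer $m\ge0$, $T^{(m)}=T^m/m!$ and $\binom{T}{m}=T(T-1)\cdots(T-m+1)/m!$; both are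 defined to be $0$ for negative $m$. *)

theory Defs
  imports Complex_Main
begin

text \<open>The tensor power E^{\<otimes>d} of E = Q^2 is modelled as the space of functions on
  words of length d over the alphabet {1,2}: the basis vector e_{w_1} \<otimes> ... \<otimes> e_{w_d}
  corresponds to the word w.  A vector is a function phi :: nat list => rat (only its values on
  words d matter) and an endomorphism is a map vec => vec.\<close>

type_synonym vec = "nat list \<Rightarrow> rat"
type_synonym endo = "vec \<Rightarrow> vec"

definition words :: "nat \<Rightarrow> nat list set" where
  "words d = {w. length w = d \<and> set w \<subseteq> {1, 2}}"

text \<open>rho d x: x a 2x2 rational matrix (entries x k l, k,l in {1,2}) acting on E^{\<otimes>d}
  as sum_i 1 \<otimes> ... \<otimes> x \<otimes> ... \<otimes> 1, written in coordinates.\<close>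
definition rho :: "nat \<Rightarrow> (nat \<Rightarrow> nat \<Rightarrow> rat) \<Rightarrow> endo" where
  "rho d x phi w = (\<Sum>i<d. \<Sum>j\<in>{1::nat, 2}. x (w ! i) j * phi (w[i := j]))"

definition matunit :: "nat \<Rightarrow> nat \<Rightarrow> nat \<Rightarrow> nat \<Rightarrow> rat" where
  "matunit i j = (\<lambda>k l. if k = i \<and> l = j then 1 else 0)"

definition e_op :: "nat \<Rightarrow> endo" where "e_op d = rho d (matunit 1 2)"
definition f_op :: "nat \<Rightarrow> endo" where "f_op d = rho d (matunit 2 1)"
definition H1_op :: "nat \<Rightarrow> endo" where "H1_op d = rho d (matunit 1 1)"
definition H2_op :: "nat \<Rightarrow> endo" where "H2_op d = rho d (matunit 2 2)"

definition divpow :: "endo \<Rightarrow> nat \<Rightarrow> endo" where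
  "divpow T m phi w = (T ^^ m) phi w / of_nat (fact m)"

fun fallprod :: "endo \<Rightarrow> nat \<Rightarrow> endo" where
  "fallprod T 0 = id"
| "fallprod T (Suc m) = (\<lambda>phi w. T (fallprod T m phi) w - of_nat m * fallprod T m phi w)"

definition binop :: "endo \<Rightarrow> nat \<Rightarrow> endo" where
  "binop T m phi w = fallprod T m phi w / of_nat (fact m)"

end

theory Submission
  imports Defs
begin

text \<open>
  Encode a word of length \<open>d\<close> by the set \<open>X\<close> of positions carrying a fixed letter \<open>t\<close>.
  In these coordinates the two off-diagonal matrix units act by adding or removing one position
  and the diagonal one by \<open>card X\<close>, so divided powers become sums over supersets or subsets with
  prescribed difference, and both sides of each identity become matrices indexed by pairs \<open>(X, Y)\<close>.
  The entry of the left-hand side is \<open>C(r, m) C(m, b)\<close>, where \<open>r = |X \<inter> Y|\<close> and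
  \<open>m = |X| - a = |Y| - c\<close>; the entry of the \<open>k\<close>-th summand on the right, including its factor
  \<open>C(b + k, k)\<close>, is \<open>C(r, m) C(m, b) C(r - m, k)\<close>.  So the identity reduces to
  \<open>\<Sum>k = s..n. (-1)^(k - s) C(k - 1, s - 1) C(n, k) = 1\<close> for \<open>1 \<le> s \<le> n = r - m\<close>,
  and \<open>s \<le> n\<close> follows from \<open>|X \<union> Y| \<le> d\<close> whenever \<open>C(m, b) \<noteq> 0\<close>.
\<close>

section \<open>Binomial identities\<close>

lemma alternating_choose_orthogonality:
  "(\<Sum>j\<le>n. (-1) ^ (j - t) * of_nat (n choose j) * of_nat (j choose t))
    = (of_bool (n = t) :: 'a :: comm_ring_1)"
proof (cases "t \<le> n")
  case False
  then show ?thesis by (intro trans[OF sum.neutral]) (auto simp: binomial_eq_0)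
next
  case True
  have "(\<Sum>j\<le>n. (-1) ^ (j - t) * of_nat (n choose j) * of_nat (j choose t))
      = (\<Sum>j\<in>{t..n}. (-1) ^ (j - t) * of_nat (n choose j) * (of_nat (j choose t) :: 'a))"
    by (rule sum.mono_neutral_right) (auto simp: binomial_eq_0)
  also have "\<dots> = (\<Sum>i\<le>n - t. (-1) ^ i * of_nat (n choose (i + t)) * of_nat ((i + t) choose t))"
    using True by (intro sum.reindex_bij_witness[of _ "\<lambda>i. i + t" "\<lambda>j. j - t"]) auto
  also have "\<dots> = of_nat (n choose t) * (\<Sum>i\<le>n - t. (-1) ^ i * of_nat ((n - t) choose i))"
    unfolding sum_distrib_left
  proof (intro sum.cong refl)
    fix i assume "i \<in> {..n - t}"
    then have "(n choose (i + t)) * ((i + t) choose t) = (n choose t) * ((n - t) choose i)"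
      using choose_mult[of t "i + t" n] True by simp
    then show "(-1) ^ i * of_nat (n choose (i + t)) * of_nat ((i + t) choose t)
        = of_nat (n choose t) * ((-1) ^ i * (of_nat ((n - t) choose i) :: 'a))"
      by (metis (no_types) mult.assoc mult.left_commute of_nat_mult)
  qed
  also have "\<dots> = of_bool (n = t)"
    using True choose_alternating_sum[of "n - t", where 'a = 'a] by (cases "n = t") auto
  finally show ?thesis .
qed

lemma alternating_choose_sum_lessThan:
  "(\<Sum>j<n. (-1) ^ (j - t) * of_nat (j choose t) * of_nat (n choose Suc j))
    = (of_bool (t < n) :: 'a :: comm_ring_1)"
proof (induction n)
  case 0
  then show ?case by simp
next
  case (Suc n)
  have "(\<Sum>j<Suc n. (-1) ^ (j - t) * of_nat (j choose t) * of_nat (Suc n choose Suc j))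
      = (\<Sum>j\<le>n. (-1) ^ (j - t) * of_nat (n choose j) * of_nat (j choose t))
        + (\<Sum>j<Suc n. (-1) ^ (j - t) * of_nat (j choose t) * (of_nat (n choose Suc j) :: 'a))"
    by (simp add: lessThan_Suc_atMost sum.distrib[symmetric] algebra_simps)
  also have "\<dots> = of_bool (n = t) + of_bool (t < n)"
    using Suc.IH by (simp add: alternating_choose_orthogonality binomial_eq_0)
  finally show ?case by auto
qed

lemma alternating_choose_sum:
  assumes "1 \<le> s" "s \<le> n"
  shows "(\<Sum>k\<in>{s..n}. (-1) ^ (k - s) * of_nat ((k - 1) choose (s - 1)) * of_nat (n choose k))
    = (1 :: 'a :: comm_ring_1)"
proof -
  have "(\<Sum>k\<in>{s..n}. (-1) ^ (k - s) * of_nat ((k - 1) choose (s - 1)) * of_nat (n choose k))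
      = (\<Sum>j<n. (-1) ^ (j - (s - 1)) * of_nat (j choose (s - 1)) * (of_nat (n choose Suc j) :: 'a))"
    using assms
    by (intro sum.reindex_bij_witness_not_neutral[where S' = "{}" and T' = "{..<s - 1}"
          and i = Suc and j = "\<lambda>k. k - 1"])
       (auto simp: binomial_eq_0)
  also have "\<dots> = 1"
    using alternating_choose_sum_lessThan[where n = n and t = "s - 1", where 'a = 'a] assms by simp
  finally show ?thesis .
qed

lemma choose_mult_shift:
  "((b + k) choose k) * (r choose (m + k)) * ((m + k) choose (b + k))
     = (r choose m) * (m choose b) * ((r - m) choose k)"
proof (cases "b \<le> m \<and> m + k \<le> r")
  case True
  have "((b + k) choose k) * (r choose (m + k)) * ((m + k) choose (b + k))
      = (r choose (m + k)) * (((m + k) choose (b + k)) * ((b + k) choose k))"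
    by (simp only: ac_simps)
  also have "\<dots> = ((r choose (m + k)) * ((m + k) choose m)) * (m choose b)"
    using choose_mult[of k "b + k" "m + k"] binomial_symmetric[of k "m + k"] True
    by (simp add: ac_simps)
  also have "\<dots> = (r choose m) * (m choose b) * ((r - m) choose k)"
    using choose_mult[of m "m + k" r] True by (simp add: ac_simps)
  finally show ?thesis .
next
  case False
  then have "m < b \<or> r < m \<or> r - m < k" by linarith
  then show ?thesis using False by (auto simp: binomial_eq_0)
qed

lemma choose_mult_shift_sum:
  assumes "1 \<le> s" "r \<le> a + m" "r \<le> c + m" "b \<le> m \<Longrightarrow> m \<le> r \<Longrightarrow> s \<le> r - m"
  shows "of_nat ((r choose m) * (m choose b))
    = (\<Sum>k\<in>{s..min a c}. (-1) ^ (k - s) * of_nat ((k - 1) choose (s - 1)) * of_nat ((b + k) choose k)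
         * (of_nat ((r choose (m + k)) * ((m + k) choose (b + k))) :: 'a :: comm_ring_1))"
proof -
  have shift: "of_nat ((b + k) choose k) * (of_nat ((r choose (m + k)) * ((m + k) choose (b + k))) :: 'a)
      = of_nat ((r choose m) * (m choose b)) * of_nat ((r - m) choose k)" for k
    by (simp only: of_nat_mult [symmetric] mult.assoc [symmetric] choose_mult_shift)
  have "(\<Sum>k\<in>{s..min a c}. (-1) ^ (k - s) * of_nat ((k - 1) choose (s - 1)) * of_nat ((b + k) choose k)
         * (of_nat ((r choose (m + k)) * ((m + k) choose (b + k))) :: 'a))
      = of_nat ((r choose m) * (m choose b))
        * (\<Sum>k\<in>{s..min a c}. (-1) ^ (k - s) * of_nat ((k - 1) choose (s - 1)) * of_nat ((r - m) choose k))"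
    unfolding sum_distrib_left
    by (intro sum.cong refl) (simp only: mult.assoc shift mult.left_commute)
  also have "\<dots> = of_nat ((r choose m) * (m choose b))"
  proof (cases "b \<le> m \<and> m \<le> r")
    case True
    have "(\<Sum>k\<in>{s..min a c}. (-1) ^ (k - s) * of_nat ((k - 1) choose (s - 1)) * of_nat ((r - m) choose k))
        = (\<Sum>k\<in>{s..r - m}. (-1) ^ (k - s) * of_nat ((k - 1) choose (s - 1)) * (of_nat ((r - m) choose k) :: 'a))"
      using assms(2,3) by (intro sum.mono_neutral_right) (auto simp: binomial_eq_0)
    also have "\<dots> = 1"
      using True assms(1,4) by (intro alternating_choose_sum) auto
    finally show ?thesis by simp
  qed (auto simp: binomial_eq_0)
  finally show ?thesis by (rule sym)
qed

text \<open>The entry at \<open>(X, Y)\<close> of the composite operator of \<open>composite_word_of_set\<close>, as a function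
  of \<open>p = card X\<close>, \<open>q = card Y\<close> and \<open>r = card (X \<inter> Y)\<close>.\<close>
definition composite_coeff :: "nat \<Rightarrow> nat \<Rightarrow> nat \<Rightarrow> nat \<Rightarrow> nat \<Rightarrow> nat \<Rightarrow> rat" where
  "composite_coeff a b c p q r =
     (if a \<le> p \<and> c \<le> q \<and> p - a = q - c then of_nat ((r choose (p - a)) * ((p - a) choose b)) else 0)"

lemma composite_coeff_expansion:
  assumes "r \<le> p" "r \<le> q" "p + q \<le> d + r" "d < a + b + c"
  defines "s \<equiv> a + b + c - d"
  shows "composite_coeff a b c p q r
    = (\<Sum>k\<in>{s..min a c}. (-1) ^ (k - s) * of_nat ((k - 1) choose (s - 1)) * of_nat ((b + k) choose k)
         * composite_coeff (a - k) (b + k) (c - k) p q r)"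
proof -
  have "p + c \<noteq> q + a \<or> (p + c = q + a \<and> p < a) \<or> (p = a + (p - a) \<and> q = c + (p - a))"
    by arith
  then consider "p + c \<noteq> q + a" | "p + c = q + a" "p < a" | m where "p = a + m" "q = c + m"
    by blast
  then show ?thesis
  proof cases
    case 1
    then show ?thesis by (auto simp: composite_coeff_def intro!: sum.neutral)
  next
    case 2
    have "composite_coeff (a - k) (b + k) (c - k) p q r = 0" if "k \<in> {s..min a c}" for k
    proof -
      have "p - (a - k) < b + k" using 2 that assms(4) by (auto simp: s_def)
      then show ?thesis by (simp add: composite_coeff_def binomial_eq_0)
    qed
    then show ?thesis using 2 by (simp add: composite_coeff_def)
  next
    case 3
    have shifted: "composite_coeff (a - k) (b + k) (c - k) p q r = of_nat ((r choose (m + k)) * ((m + k) choose (b + k)))"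
      if "k \<in> {s..min a c}" for k
    proof -
      have "a - k \<le> p" "c - k \<le> q" "p - (a - k) = m + k" "q - (c - k) = m + k"
        using that 3 by auto
      then show ?thesis by (simp add: composite_coeff_def)
    qed
    have "composite_coeff a b c p q r = of_nat ((r choose m) * (m choose b))"
      using 3 by (simp add: composite_coeff_def)
    also have "\<dots> = (\<Sum>k\<in>{s..min a c}. (-1) ^ (k - s) * of_nat ((k - 1) choose (s - 1))
        * of_nat ((b + k) choose k) * of_nat ((r choose (m + k)) * ((m + k) choose (b + k))))"
      by (rule choose_mult_shift_sum) (use 3 assms(1-4) in \<open>auto simp: s_def\<close>)
    also have "\<dots> = (\<Sum>k\<in>{s..min a c}. (-1) ^ (k - s) * of_nat ((k - 1) choose (s - 1))
        * of_nat ((b + k) choose k) * composite_coeff (a - k) (b + k) (c - k) p q r)"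
      by (intro sum.cong refl) (simp add: shifted)
    finally show ?thesis .
  qed
qed

section \<open>Words as sets of positions\<close>

definition word_of_set :: "nat \<Rightarrow> nat \<Rightarrow> nat set \<Rightarrow> nat list" where
  "word_of_set d t X = map (\<lambda>i. if i \<in> X then t else 3 - t) [0..<d]"

lemma length_word_of_set [simp]: "length (word_of_set d t X) = d"
  by (simp add: word_of_set_def)

lemma nth_word_of_set [simp]: "i < d \<Longrightarrow> word_of_set d t X ! i = (if i \<in> X then t else 3 - t)"
  by (simp add: word_of_set_def)

lemma word_of_set_update_letter:
  "i < d \<Longrightarrow> (word_of_set d t X)[i := t] = word_of_set d t (insert i X)"
  by (rule nth_equalityI) (auto simp: nth_list_update)

lemma word_of_set_update_other:
  "i < d \<Longrightarrow> (word_of_set d t X)[i := 3 - t] = word_of_set d t (X - {i})"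
  by (rule nth_equalityI) (auto simp: nth_list_update)

lemma word_of_set_positions:
  assumes "t \<in> {1, 2}" "w \<in> words d"
  shows "word_of_set d t {i. i < d \<and> w ! i = t} = w"
proof (rule nth_equalityI)
  fix i assume "i < length (word_of_set d t {i. i < d \<and> w ! i = t})"
  then have "i < d" by simp
  then have "w ! i \<in> set w"
    using assms(2) by (simp add: words_def)
  then have "w ! i = 1 \<or> w ! i = 2"
    using assms(2) by (auto simp: words_def)
  with \<open>i < d\<close> show "word_of_set d t {i. i < d \<and> w ! i = t} ! i = w ! i"
    using assms(1) by auto
qed (use assms(2) in \<open>simp add: words_def\<close>)

lemma word_of_set_complement:
  "t \<in> {1, 2} \<Longrightarrow> word_of_set d (3 - t) ({..<d} - X) = word_of_set d t X"
  by (rule nth_equalityI) auto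

lemma rho_word_of_set:
  assumes "t \<in> {1, 2}"
  shows "rho d x phi (word_of_set d t X)
    = (\<Sum>i<d. x (if i \<in> X then t else 3 - t) t * phi (word_of_set d t (insert i X))
             + x (if i \<in> X then t else 3 - t) (3 - t) * phi (word_of_set d t (X - {i})))"
proof -
  have letters: "{1, 2} = {t, 3 - t}" "t \<noteq> 3 - t"
    using assms by auto
  show ?thesis
    unfolding rho_def letters(1) using letters(2)
    by (intro sum.cong refl) (simp add: word_of_set_update_letter word_of_set_update_other)
qed

lemma rho_raise_word_of_set:
  assumes "t \<in> {1, 2}"
  shows "rho d (matunit (3 - t) t) phi (word_of_set d t X)
    = (\<Sum>i<d. of_bool (i \<notin> X) * phi (word_of_set d t (insert i X)))"
  unfolding rho_word_of_set[OF assms] by (intro sum.cong refl) (use assms in \<open>auto simp: matunit_def\<close>)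

lemma rho_weight_word_of_set:
  assumes "t \<in> {1, 2}" "X \<subseteq> {..<d}"
  shows "rho d (matunit t t) phi (word_of_set d t X) = of_nat (card X) * phi (word_of_set d t X)"
proof -
  have "rho d (matunit t t) phi (word_of_set d t X) = (\<Sum>i<d. of_bool (i \<in> X) * phi (word_of_set d t X))"
    unfolding rho_word_of_set[OF assms(1)]
    by (intro sum.cong refl) (use assms(1) in \<open>auto simp: matunit_def insert_absorb\<close>)
  also have "\<dots> = of_nat (card X) * phi (word_of_set d t X)"
    using assms(2) by (simp add: Int_absorb1 flip: Int_def)
  finally show ?thesis .
qed

lemma sum_one_point_extensions:
  fixes d :: nat
  assumes "Y \<subseteq> {..<d}"
  shows "(\<Sum>i<d. of_bool (i \<notin> X \<and> insert i X \<subseteq> Y \<and> card (Y - insert i X) = c))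
       = (of_nat (Suc c) * of_bool (X \<subseteq> Y \<and> card (Y - X) = Suc c) :: 'a :: semiring_1)"
proof -
  have "finite Y" using assms by (rule finite_subset) simp
  have "card (Y - X) = Suc (card (Y - insert i X))" if "i \<in> Y - X" for i
  proof -
    have "Y - insert i X = (Y - X) - {i}" by blast
    moreover have "card (Y - X) > 0"
      using that \<open>finite Y\<close> by (auto simp: card_gt_0_iff)
    ultimately show ?thesis using card_Diff_singleton[OF that] by simp
  qed
  then have "{..<d} \<inter> {i. i \<notin> X \<and> insert i X \<subseteq> Y \<and> card (Y - insert i X) = c}
      = (if X \<subseteq> Y \<and> card (Y - X) = Suc c then Y - X else {})"
    using assms by auto
  then show ?thesis by simp
qed

lemma raise_power_word_of_set:
  assumes "t \<in> {1, 2}" "X \<subseteq> {..<d}"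
  shows "(rho d (matunit (3 - t) t) ^^ c) phi (word_of_set d t X)
    = fact c * (\<Sum>Y\<in>Pow {..<d}. of_bool (X \<subseteq> Y \<and> card (Y - X) = c) * phi (word_of_set d t Y))"
  using assms(2)
proof (induction c arbitrary: X)
  case 0
  have "Pow {..<d} \<inter> {Y. X \<subseteq> Y \<and> card (Y - X) = 0} = {X}"
    using 0 by (auto dest: finite_subset)
  then show ?case by simp
next
  case (Suc c)
  let ?U = "rho d (matunit (3 - t) t)" and ?W = "word_of_set d t"
  have "(?U ^^ Suc c) phi (?W X) = (\<Sum>i<d. of_bool (i \<notin> X) * (?U ^^ c) phi (?W (insert i X)))"
    using assms(1) by (simp add: rho_raise_word_of_set)
  also have "\<dots> = (\<Sum>i<d. \<Sum>Y\<in>Pow {..<d}. fact c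
      * (of_bool (i \<notin> X \<and> insert i X \<subseteq> Y \<and> card (Y - insert i X) = c) * phi (?W Y)))"
  proof (intro sum.cong refl)
    fix i assume "i \<in> {..<d}"
    then have "insert i X \<subseteq> {..<d}" using Suc.prems by auto
    then show "of_bool (i \<notin> X) * (?U ^^ c) phi (?W (insert i X)) = (\<Sum>Y\<in>Pow {..<d}. fact c
      * (of_bool (i \<notin> X \<and> insert i X \<subseteq> Y \<and> card (Y - insert i X) = c) * phi (?W Y)))"
      by (cases "i \<in> X") (simp_all add: Suc.IH sum_distrib_left del: sum_of_bool_mult_eq)
  qed
  also have "\<dots> = fact c * (\<Sum>Y\<in>Pow {..<d}.
      (\<Sum>i<d. of_bool (i \<notin> X \<and> insert i X \<subseteq> Y \<and> card (Y - insert i X) = c)) * phi (?W Y))"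
    unfolding sum_distrib_left sum_distrib_right by (rule sum.swap)
  also have "\<dots> = fact (Suc c) * (\<Sum>Y\<in>Pow {..<d}. of_bool (X \<subseteq> Y \<and> card (Y - X) = Suc c) * phi (?W Y))"
    by (simp only: sum_one_point_extensions[OF PowD] sum_distrib_left fact_Suc mult_ac cong: sum.cong)
  finally show ?case .
qed

lemma lower_power_word_of_set:
  assumes "t \<in> {1, 2}" "X \<subseteq> {..<d}"
  shows "(rho d (matunit t (3 - t)) ^^ a) phi (word_of_set d t X)
    = fact a * (\<Sum>Z\<in>Pow {..<d}. of_bool (Z \<subseteq> X \<and> card (X - Z) = a) * phi (word_of_set d t Z))"
proof -
  \<comment> \<open>Lowering for the letter \<open>t\<close> is raising for the letter \<open>3 - t\<close> on complements.\<close>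
  let ?C = "\<lambda>Z. {..<d} - Z"
  have other: "3 - t \<in> {1, 2}" "3 - (3 - t) = t"
    using assms(1) by auto
  have "(rho d (matunit t (3 - t)) ^^ a) phi (word_of_set d t X)
      = (rho d (matunit (3 - (3 - t)) (3 - t)) ^^ a) phi (word_of_set d (3 - t) (?C X))"
    using assms(1) by (simp add: other word_of_set_complement)
  also have "\<dots> = fact a * (\<Sum>Y\<in>Pow {..<d}. of_bool (?C X \<subseteq> Y \<and> card (Y - ?C X) = a)
      * phi (word_of_set d (3 - t) Y))"
    using other(1) by (rule raise_power_word_of_set) auto
  also have "\<dots> = fact a * (\<Sum>Z\<in>Pow {..<d}. of_bool (Z \<subseteq> X \<and> card (X - Z) = a) * phi (word_of_set d t Z))"
  proof -
    have "of_bool (?C X \<subseteq> ?C Z \<and> card (?C Z - ?C X) = a) * phi (word_of_set d (3 - t) (?C Z))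
        = of_bool (Z \<subseteq> X \<and> card (X - Z) = a) * phi (word_of_set d t Z)"
      if "Z \<in> Pow {..<d}" for Z
    proof -
      have "?C X \<subseteq> ?C Z \<longleftrightarrow> Z \<subseteq> X" "?C Z - ?C X = X - Z"
        using that assms(2) by auto
      then show ?thesis by (simp only: word_of_set_complement[OF assms(1)])
    qed
    then show ?thesis
      by (intro arg_cong[where f = "(*) _"] sum.reindex_bij_witness[of _ ?C ?C, symmetric]) auto
  qed
  finally show ?thesis .
qed

section \<open>Matrix entries of the composite operators\<close>

lemma fallprod_eigen:
  assumes "\<And>psi. T psi w = of_nat n * psi w"
  shows "fallprod T m phi w = (\<Prod>j<m. of_nat n - of_nat j) * phi w"
  by (induction m) (simp_all add: assms algebra_simps)

lemma binop_eigen: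
  assumes "\<And>psi. T psi w = of_nat n * psi w"
  shows "binop T m phi w = of_nat (n choose m) * phi w"
proof -
  have "(of_nat (n choose m) :: rat) = (\<Prod>j<m. of_nat n - of_nat j) / fact m"
    by (simp add: binomial_gbinomial gbinomial_prod_rev atLeast0LessThan)
  then show ?thesis
    by (simp add: binop_def fallprod_eigen[of T w n m phi, OF assms])
qed

lemma of_bool_mult_of_bool: "of_bool P * x * of_bool Q = of_bool (P \<and> Q) * (x :: 'a :: comm_semiring_1)"
  by simp

lemma sum_common_subsets:
  assumes "finite A" "X \<subseteq> A" "Y \<subseteq> A"
  shows "(\<Sum>Z\<in>Pow A. of_bool (Z \<subseteq> X \<and> card (X - Z) = a) * of_nat (card Z choose b)
            * of_bool (Z \<subseteq> Y \<and> card (Y - Z) = c))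
       = composite_coeff a b c (card X) (card Y) (card (X \<inter> Y))"
proof -
  have card_Diff: "card (S - Z) = k \<longleftrightarrow> card S = k + card Z" if "Z \<subseteq> S" "S \<subseteq> A" for S Z k
  proof -
    have "finite S" "finite Z" using that assms(1) by (auto intro: finite_subset)
    then have "card (S - Z) = card S - card Z" "card Z \<le> card S"
      using that(1) by (simp_all add: card_Diff_subset card_mono)
    then show ?thesis by arith
  qed
  let ?S = "{Z. Z \<subseteq> X \<inter> Y \<and> card X = a + card Z \<and> card Y = c + card Z}"
  have common: "(Z \<subseteq> X \<and> card (X - Z) = a) \<and> (Z \<subseteq> Y \<and> card (Y - Z) = c) \<longleftrightarrow> Z \<in> ?S" for Z
    using assms(2,3) card_Diff[of Z X a] card_Diff[of Z Y c] by auto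
  have "(\<Sum>Z\<in>Pow A. of_bool (Z \<subseteq> X \<and> card (X - Z) = a) * of_nat (card Z choose b)
            * of_bool (Z \<subseteq> Y \<and> card (Y - Z) = c))
      = (\<Sum>Z\<in>Pow A. of_bool (Z \<in> ?S) * (of_nat (card Z choose b) :: rat))"
    by (intro sum.cong refl) (simp only: of_bool_mult_of_bool common)
  also have "\<dots> = (\<Sum>Z\<in>?S. of_nat (card Z choose b))"
    using assms by (intro sum.mono_neutral_cong_right) auto
  also have "\<dots> = composite_coeff a b c (card X) (card Y) (card (X \<inter> Y))"
  proof (cases "a \<le> card X \<and> c \<le> card Y \<and> card X - a = card Y - c")
    case True
    define m where "m = card X - a"
    have "finite (X \<inter> Y)" using assms by (auto intro: finite_subset)
    have "(\<Sum>Z\<in>?S. of_nat (card Z choose b))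
        = (\<Sum>Z\<in>{Z. Z \<subseteq> X \<inter> Y \<and> card Z = m}. (of_nat (m choose b) :: rat))"
      using True by (intro sum.cong) (auto simp: m_def)
    also have "\<dots> = of_nat ((card (X \<inter> Y) choose m) * (m choose b))"
      by (simp only: sum_constant n_subsets[OF \<open>finite (X \<inter> Y)\<close>] of_nat_mult)
    finally show ?thesis
      using True by (simp add: composite_coeff_def m_def)
  next
    case False
    then have "?S = {}" by auto
    then show ?thesis
      unfolding composite_coeff_def using False by (simp only: sum.empty if_False)
  qed
  finally show ?thesis .
qed

lemma composite_word_of_set:
  assumes t: "t \<in> {1, 2}" and X: "X \<subseteq> {..<d}"
  shows "(divpow (rho d (matunit t (3 - t))) a \<circ> binop (rho d (matunit t t)) b
          \<circ> divpow (rho d (matunit (3 - t) t)) c) phi (word_of_set d t X)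
       = (\<Sum>Y\<in>Pow {..<d}. composite_coeff a b c (card X) (card Y) (card (X \<inter> Y)) * phi (word_of_set d t Y))"
proof -
  let ?D = "rho d (matunit t (3 - t))" and ?H = "rho d (matunit t t)" and ?U = "rho d (matunit (3 - t) t)"
  let ?W = "word_of_set d t"
  define psi where "psi = binop ?H b (divpow ?U c phi)"
  have psi: "psi (?W Z) = of_nat (card Z choose b)
      * (\<Sum>Y\<in>Pow {..<d}. of_bool (Z \<subseteq> Y \<and> card (Y - Z) = c) * phi (?W Y))"
    if "Z \<in> Pow {..<d}" for Z
  proof -
    have Z: "Z \<subseteq> {..<d}" using that by simp
    have "psi (?W Z) = of_nat (card Z choose b) * divpow ?U c phi (?W Z)"
      unfolding psi_def using rho_weight_word_of_set[OF t Z] by (rule binop_eigen)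
    then show ?thesis
      by (simp add: divpow_def raise_power_word_of_set[OF t Z] del: sum_of_bool_mult_eq)
  qed
  have "(divpow ?D a \<circ> binop ?H b \<circ> divpow ?U c) phi (?W X)
      = (\<Sum>Z\<in>Pow {..<d}. of_bool (Z \<subseteq> X \<and> card (X - Z) = a) * psi (?W Z))"
    by (simp add: psi_def divpow_def lower_power_word_of_set[OF t X] del: sum_of_bool_mult_eq)
  also have "\<dots> = (\<Sum>Z\<in>Pow {..<d}. \<Sum>Y\<in>Pow {..<d}. of_bool (Z \<subseteq> X \<and> card (X - Z) = a)
      * of_nat (card Z choose b) * of_bool (Z \<subseteq> Y \<and> card (Y - Z) = c) * phi (?W Y))"
    by (intro sum.cong refl) (simp only: psi sum_distrib_left mult.assoc)
  also have "\<dots> = (\<Sum>Y\<in>Pow {..<d}. (\<Sum>Z\<in>Pow {..<d}. of_bool (Z \<subseteq> X \<and> card (X - Z) = a)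
      * of_nat (card Z choose b) * of_bool (Z \<subseteq> Y \<and> card (Y - Z) = c)) * phi (?W Y))"
    by (subst sum.swap) (simp only: sum_distrib_right)
  also have "\<dots> = (\<Sum>Y\<in>Pow {..<d}. composite_coeff a b c (card X) (card Y) (card (X \<inter> Y)) * phi (?W Y))"
    by (intro sum.cong refl) (simp only: sum_common_subsets[OF finite_lessThan X PowD])
  finally show ?thesis .
qed

lemma divided_power_identity:
  assumes t: "t \<in> {1, 2}" and "d < a + b + c" "w \<in> words d"
  defines "s \<equiv> a + b + c - d"
  shows "(divpow (rho d (matunit t (3 - t))) a \<circ> binop (rho d (matunit t t)) b
            \<circ> divpow (rho d (matunit (3 - t) t)) c) phi w
       = (\<Sum>k\<in>{s..min a c}. (-1) ^ (k - s) * of_nat ((k - 1) choose (s - 1)) * of_nat ((b + k) choose k)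
            * (divpow (rho d (matunit t (3 - t))) (a - k) \<circ> binop (rho d (matunit t t)) (b + k)
                 \<circ> divpow (rho d (matunit (3 - t) t)) (c - k)) phi w)"
proof -
  define X where "X = {i. i < d \<and> w ! i = t}"
  have w: "w = word_of_set d t X"
    unfolding X_def using word_of_set_positions[OF t assms(3)] by simp
  have X: "X \<subseteq> {..<d}"
    unfolding X_def by auto
  have expansion: "composite_coeff a b c (card X) (card Y) (card (X \<inter> Y))
      = (\<Sum>k\<in>{s..min a c}. (-1) ^ (k - s) * of_nat ((k - 1) choose (s - 1)) * of_nat ((b + k) choose k)
           * composite_coeff (a - k) (b + k) (c - k) (card X) (card Y) (card (X \<inter> Y)))"
    if "Y \<in> Pow {..<d}" for Y
  proof -
    have fin: "finite X" "finite Y" using X that by (auto intro: finite_subset)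
    have "card (X \<union> Y) \<le> d"
      using X that card_mono[of "{..<d}" "X \<union> Y"] by auto
    then have "card X + card Y \<le> d + card (X \<inter> Y)"
      using card_Un_Int[OF fin] by simp
    then show ?thesis
      unfolding s_def using fin assms(2)
      by (intro composite_coeff_expansion) (auto intro: card_mono)
  qed
  have "(\<Sum>Y\<in>Pow {..<d}. composite_coeff a b c (card X) (card Y) (card (X \<inter> Y)) * phi (word_of_set d t Y))
      = (\<Sum>Y\<in>Pow {..<d}. (\<Sum>k\<in>{s..min a c}. (-1) ^ (k - s) * of_nat ((k - 1) choose (s - 1))
           * of_nat ((b + k) choose k) * composite_coeff (a - k) (b + k) (c - k) (card X) (card Y) (card (X \<inter> Y)))
           * phi (word_of_set d t Y))"
    by (intro sum.cong refl) (simp only: expansion)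
  also have "\<dots> = (\<Sum>k\<in>{s..min a c}. (-1) ^ (k - s) * of_nat ((k - 1) choose (s - 1)) * of_nat ((b + k) choose k)
      * (\<Sum>Y\<in>Pow {..<d}. composite_coeff (a - k) (b + k) (c - k) (card X) (card Y) (card (X \<inter> Y))
           * phi (word_of_set d t Y)))"
    by (simp only: sum_distrib_left sum_distrib_right mult.assoc) (rule sum.swap)
  finally show ?thesis
    unfolding w composite_word_of_set[OF t X] .
qed

theorem theorem2p5:
  fixes d a b c :: nat
  assumes "a + b + c > d"
  defines "s \<equiv> a + b + c - d"
  shows "(\<forall>phi. \<forall>w\<in>words d.
           (divpow (f_op d) a \<circ> binop (H2_op d) b \<circ> divpow (e_op d) c) phi w
         = (\<Sum>k\<in>{s..min a c}. (-1) ^ (k - s) * of_nat ((k - 1) choose (s - 1))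
              * of_nat ((b + k) choose k)
              * (divpow (f_op d) (a - k) \<circ> binop (H2_op d) (b + k) \<circ> divpow (e_op d) (c - k)) phi w))
       \<and> (\<forall>phi. \<forall>w\<in>words d.
           (divpow (e_op d) a \<circ> binop (H1_op d) b \<circ> divpow (f_op d) c) phi w
         = (\<Sum>k\<in>{s..min a c}. (-1) ^ (k - s) * of_nat ((k - 1) choose (s - 1))
              * of_nat ((b + k) choose k)
              * (divpow (e_op d) (a - k) \<circ> binop (H1_op d) (b + k) \<circ> divpow (f_op d) (c - k)) phi w))"
proof -
  have letters: "(1 :: nat) \<in> {1, 2}" "(2 :: nat) \<in> {1, 2}"
    by simp_all
  have letter_1: "e_op d = rho d (matunit 1 (3 - 1))" "H1_op d = rho d (matunit 1 1)"
    "f_op d = rho d (matunit (3 - 1) 1)"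
    by (simp_all add: e_op_def H1_op_def f_op_def)
  have letter_2: "f_op d = rho d (matunit 2 (3 - 2))" "H2_op d = rho d (matunit 2 2)"
    "e_op d = rho d (matunit (3 - 2) 2)"
    by (simp_all add: f_op_def H2_op_def e_op_def)
  show ?thesis
    using divided_power_identity[OF letters(2) assms(1), folded letter_2]
      divided_power_identity[OF letters(1) assms(1), folded letter_1]
    unfolding s_def by blast
qed

end
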